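(* Under the standing assumptions, there is a constant $C>0$ such that for all integers $n\ge1$, all $\delta\in(0,1)$ and all $j\in\{1,\dots,d^n\}$, $$N_\delta\big(S_{n,j}(E)\big)\le C\,N_{\delta/|S'_{n,j}(E)|}(E).$$
   Context: Standing assumptions: $T$ is a rational map of degree $d\ge2$ whose Julia set $J$ is a bounded subset of $\mathbb{C}$, $J\ne\mathbb{C}_\infty$; $E\subseteq\mathbb{C}$ is non-empty and compact; $U\subseteq\mathbb{C}$ is a simply connected open set with $E\subseteq U$, $U\cap P(T)=\emptyset$, $U\cap J\ne\emptyset$, where $P(T)=\overline{\bigcup_{n\ge1}T^n(\mathrm{Crit}(T))}$ is the post-critical set; the orbital set $\bigcup_{k\ge0}T^{-k}(E)$ is bounded in $\mathbb{C}$. Since $U$ contains no critical values of $T^n$, for each $n\ge1$ there are $d^n$ univalent analytic inverse branches $S_{n,1},\dots,S_{n,d^n}$ of $T^{-n}$ defined on all of $U$ (so $T^n\circ S_{n,j}=\mathrm{id}_U$ and $S_{n,1}(w),\dots,S_{n,d^n}(w)$ are the $d^n$ distinct points of $T^{-n}(w)$); $S_{0,1}$ is the identity. Write $|S'_{n,j}(E)|:=\max_{z\in E}|S'_{n,j}(z)|$. $N_\delta(A)$ is the minimal number of open sets of diameter at most $\delta$ needed to cover $A$. *)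

theory Defs
  imports "HOL-Complex_Analysis.Complex_Analysis" "HOL-Computational_Algebra.Polynomial"
begin

text \<open>The Riemann sphere is modelled as complex option, None being the point at infinity.\<close>

type_synonym sphere = "complex option"

fun chordal :: "sphere \<Rightarrow> sphere \<Rightarrow> real" where
  "chordal (Some z) (Some w) =
     2 * cmod (z - w) / (sqrt (1 + (cmod z)\<^sup>2) * sqrt (1 + (cmod w)\<^sup>2))"
| "chordal (Some z) None = 2 / sqrt (1 + (cmod z)\<^sup>2)"
| "chordal None (Some w) = 2 / sqrt (1 + (cmod w)\<^sup>2)"
| "chordal None None = 0"

definition sball :: "sphere \<Rightarrow> real \<Rightarrow> sphere set" where
  "sball a r = {b. chordal a b < r}"

definition sclosure :: "sphere set \<Rightarrow> sphere set" where
  "sclosure A = {x. \<forall>r>0. \<exists>y\<in>A. chordal x y < r}"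

definition rat_eval :: "complex poly \<Rightarrow> complex poly \<Rightarrow> sphere \<Rightarrow> sphere" where
  "rat_eval p q x = (case x of
      Some z \<Rightarrow> (if poly q z \<noteq> 0 then Some (poly p z / poly q z) else None)
    | None \<Rightarrow> (if degree p > degree q then None
              else if degree p < degree q then Some 0
              else Some (lead_coeff p / lead_coeff q)))"

definition rational_map_of_degree :: "(sphere \<Rightarrow> sphere) \<Rightarrow> nat \<Rightarrow> bool" where
  "rational_map_of_degree T d \<longleftrightarrow>
     (\<exists>p q. coprime p q \<and> max (degree p) (degree q) = d \<and> T = rat_eval p q)"

definition iterates_normal_on :: "(sphere \<Rightarrow> sphere) \<Rightarrow> sphere set \<Rightarrow> bool" where
  "iterates_normal_on T V \<longleftrightarrow>
     (\<forall>\<sigma> :: nat \<Rightarrow> nat. \<exists>(\<phi> :: nat \<Rightarrow> nat) (g :: sphere \<Rightarrow> sphere). strict_mono \<phi> \<and>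
        (\<forall>x\<in>V. \<exists>\<epsilon>>0. sball x \<epsilon> \<subseteq> V \<and>
           (\<forall>e>0. \<exists>N. \<forall>k\<ge>N. \<forall>y\<in>sball x \<epsilon>. chordal ((T ^^ \<sigma> (\<phi> k)) y) (g y) < e)))"

definition fatou_set :: "(sphere \<Rightarrow> sphere) \<Rightarrow> sphere set" where
  "fatou_set T = {x. \<exists>r>0. iterates_normal_on T (sball x r)}"

definition julia_set :: "(sphere \<Rightarrow> sphere) \<Rightarrow> sphere set" where
  "julia_set T = - fatou_set T"

text \<open>Critical points: points at which T is not locally injective (local degree > 1).\<close>
definition crit :: "(sphere \<Rightarrow> sphere) \<Rightarrow> sphere set" where
  "crit T = {c. \<forall>r>0. \<not> inj_on T (sball c r)}"

definition postcritical :: "(sphere \<Rightarrow> sphere) \<Rightarrow> sphere set" where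
  "postcritical T = sclosure (\<Union>n\<in>{1..}. (T ^^ n) ` crit T)"

definition sph_holomorphic_on :: "(complex \<Rightarrow> sphere) \<Rightarrow> complex set \<Rightarrow> bool" where
  "sph_holomorphic_on f A \<longleftrightarrow> (\<forall>z\<in>A. \<exists>r>0. \<exists>g.
      g holomorphic_on ball z r \<and>
      ((\<forall>w\<in>ball z r. f w = Some (g w)) \<or>
       (\<forall>w\<in>ball z r. (g w = 0 \<longrightarrow> f w = None) \<and> (g w \<noteq> 0 \<longrightarrow> f w = Some (1 / g w)))))"

definition orbital_set :: "(sphere \<Rightarrow> sphere) \<Rightarrow> complex set \<Rightarrow> sphere set" where
  "orbital_set T E = (\<Union>k. (T ^^ k) -` (Some ` E))"

definition bounded_in_plane :: "sphere set \<Rightarrow> bool" where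
  "bounded_in_plane A \<longleftrightarrow> None \<notin> A \<and> bounded {z. Some z \<in> A}"

text \<open>N_delta(A): minimal number of open sets of diameter at most delta covering A.
  (Boundedness is required explicitly since the library's diameter is 0 on unbounded sets.)\<close>
definition covnum :: "real \<Rightarrow> complex set \<Rightarrow> nat" where
  "covnum \<delta> A = Inf {card F | F. finite F \<and>
      (\<forall>V\<in>F. open V \<and> bounded V \<and> diameter V \<le> \<delta>) \<and> A \<subseteq> \<Union>F}"

text \<open>|S'(E)| = max over E of |S'|, for a sphere-valued map finite on E.\<close>
definition deriv_max :: "(complex \<Rightarrow> sphere) \<Rightarrow> complex set \<Rightarrow> real" where
  "deriv_max S E = (SUP z\<in>E. cmod (deriv (\<lambda>w. the (S w)) z))"

end

(*
  A schlicht function h omits a value a with |a| < 2 (otherwise Schwarz's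
  lemma fails for h^-1(2w)), so a normalised square root of h - a omits 0 and 1 and Schottky's
  theorem bounds h on the disc of radius 1/4; Cauchy's estimate then bounds h'.  Rescaled, every
  univalent g satisfies |g y - g x| <= C r |g' x| and |g' x| ~ |g' y| on small discs.  Such
  comparability is an equivalence relation with open classes, hence holds throughout the
  connected set U, and by compactness uniformly on E: for every univalent g on U,
  |g z - g w| <= L |g' z0| |z - w| and |g' z0| <= L |g' y| for z, w, y in E.

  An inverse branch S_{n,j} omits the finite value b that another branch takes at a point of E,
  so g = 1/(S_{n,j} - b) is univalent on U.  With the point of E where |g| is smallest, the
  estimates make S_{n,j} = b + 1/g Lipschitz on E with constant L^2 |S'_{n,j}(E)|.  A cover of E
  by sets of diameter delta/|S'_{n,j}(E)| is thus mapped into balls of radius L^2 delta, each of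
  which is covered by a fixed number of sets of diameter delta.
*)
theory Submission
  imports Defs
begin

section \<open>Growth and distortion of schlicht functions\<close>

definition schlicht :: "(complex \<Rightarrow> complex) \<Rightarrow> bool" where
  "schlicht h \<longleftrightarrow> h holomorphic_on ball 0 1 \<and> inj_on h (ball 0 1) \<and> h 0 = 0 \<and> deriv h 0 = 1"

lemma schlicht_omits_value:
  assumes "schlicht h"
  obtains a where "norm a < 2" "a \<notin> h ` ball 0 1"
proof -
  have holh: "h holomorphic_on ball 0 1" and injh: "inj_on h (ball 0 1)"
    and h0: "h 0 = 0" and dh0: "deriv h 0 = 1"
    using assms by (auto simp: schlicht_def)
  have "\<not> ball 0 2 \<subseteq> h ` ball 0 1"
  proof
    assume sub: "ball 0 2 \<subseteq> h ` ball 0 1"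
    obtain \<phi> where hol\<phi>: "\<phi> holomorphic_on h ` ball 0 1"
      and d\<phi>: "\<And>z. z \<in> ball 0 1 \<Longrightarrow> deriv h z * deriv \<phi> (h z) = 1"
      and \<phi>h: "\<And>z. z \<in> ball 0 1 \<Longrightarrow> \<phi> (h z) = z"
      using holomorphic_has_inverse[OF holh _ injh] by auto
    have hol\<phi>2: "\<phi> holomorphic_on ball 0 2"
      using hol\<phi> sub holomorphic_on_subset by blast
    define \<psi> where "\<psi> = (\<lambda>w. \<phi> (2 * w))"
    have hol\<psi>: "\<psi> holomorphic_on ball 0 1"
      unfolding \<psi>_def
      by (rule holomorphic_on_compose_gen[of "\<lambda>w. 2 * w" _ \<phi> "ball 0 2", unfolded o_def])
        (use hol\<phi>2 in \<open>auto intro: holomorphic_intros simp: norm_mult\<close>)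
    have "(\<phi> has_field_derivative 1) (at 0)"
      using holomorphic_derivI[OF hol\<phi>2 open_ball, of 0] d\<phi>[of 0] dh0 h0 by simp
    then have "(\<psi> has_field_derivative 1 * 2) (at 0)"
      unfolding \<psi>_def by (intro DERIV_chain2[where g = "\<lambda>w. 2 * w"]) (auto intro!: derivative_eq_intros)
    then have d\<psi>: "deriv \<psi> 0 = 2"
      by (simp add: DERIV_imp_deriv)
    have \<psi>0: "\<psi> 0 = 0"
      unfolding \<psi>_def using \<phi>h[of 0] h0 by simp
    have "norm (\<psi> z) < 1" if "norm z < 1" for z
    proof -
      have "2 * z \<in> ball 0 2"
        using that by (simp add: norm_mult)
      then obtain w where "w \<in> ball 0 1" "2 * z = h w"
        using sub by blast
      then show ?thesis
        unfolding \<psi>_def using \<phi>h by simp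
    qed
    then have "norm (deriv \<psi> 0) \<le> 1"
      using Schwarz_Lemma(2)[OF hol\<psi> \<psi>0, of 0] by auto
    then show False
      using d\<psi> by simp
  qed
  then show ?thesis
    using that by (meson mem_ball_0 subsetI)
qed

(* Schottky's bound for r = 1, t = 1/2 enters squared, and 2 bounds the omitted value: see schlicht_bound. *)
definition schlicht_growth_const :: real where
  "schlicht_growth_const = 2 * (1 + exp (pi * exp (pi * 16)) ^ 2)"

lemma schlicht_growth_const_pos: "schlicht_growth_const > 0"
  by (simp add: schlicht_growth_const_def add_pos_nonneg)

lemma schlicht_sqrt_bound:
  assumes "schlicht h" and holk: "k holomorphic_on ball 0 1"
    and hk: "\<And>w. w \<in> ball 0 1 \<Longrightarrow> h w - a = k w ^ 2" and a: "a \<notin> h ` ball 0 1"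
    and z: "norm z \<le> 1/4"
  shows "norm (k z) \<le> norm (k 0) * exp (pi * exp (pi * 16))"
proof -
  have injh: "inj_on h (ball 0 1)"
    using assms(1) by (simp add: schlicht_def)
  have knz: "k w \<noteq> 0" if "w \<in> ball 0 1" for w
    using hk[OF that] a that by force
  define F where "F = (\<lambda>w. - k (w/2) / k 0)"
  have half: "w/2 \<in> ball 0 1" if "w \<in> cball 0 1" for w :: complex
    using that by (simp add: norm_divide)
  have "(\<lambda>w. k (w/2)) holomorphic_on cball 0 1"
    by (rule holomorphic_on_compose_gen[of "\<lambda>w. w/2" _ k "ball 0 1", unfolded o_def])
      (use holk half in \<open>auto intro!: holomorphic_intros\<close>)
  then have holF: "F holomorphic_on cball 0 1"
    unfolding F_def using knz[of 0] by (auto intro!: holomorphic_intros)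
  have F01: "\<not> (F w = 0 \<or> F w = 1)" if w: "w \<in> cball 0 1" for w
  proof -
    have "F w \<noteq> 1"
    proof
      assume "F w = 1"
      then have e: "k (w/2) = - k 0"
        using knz[of 0] unfolding F_def by (simp add: field_simps) (metis minus_minus)
      then have "h (w/2) - a = h 0 - a"
        using hk[OF half[OF w]] hk[of 0] by simp
      then have "w/2 = 0"
        using injh half[OF w] by (auto dest: inj_onD)
      then show False
        using e knz[of 0] by simp
    qed
    then show ?thesis
      unfolding F_def using knz[OF half[OF w]] knz[of 0] by simp
  qed
  have F0: "norm (F 0) \<le> 1"
    unfolding F_def using knz[of 0] by simp
  have "norm (F (2 * z)) \<le> exp (pi * exp (pi * (2 + 2 * 1 + 12 * (1/2) / (1 - 1/2))))"
    by (rule Schottky[OF holF F0 F01]) (use z in \<open>auto simp: norm_mult\<close>)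
  then have "norm (k z) / norm (k 0) \<le> exp (pi * exp (pi * 16))"
    unfolding F_def by (simp add: norm_divide)
  then show ?thesis
    using knz[of 0] by (simp add: field_simps)
qed

lemma schlicht_bound:
  assumes "schlicht h" and z: "norm z \<le> 1/4"
  shows "norm (h z) \<le> schlicht_growth_const"
proof -
  define B where "B = exp (pi * exp (pi * 16))"
  have holh: "h holomorphic_on ball 0 1" and h0: "h 0 = 0"
    using assms by (auto simp: schlicht_def)
  obtain a where a2: "norm a < 2" and a: "a \<notin> h ` ball 0 1"
    using schlicht_omits_value[OF assms(1)] .
  have "(\<lambda>w. h w - a) holomorphic_on ball 0 1" "contractible (ball (0::complex) 1)"
    using holh by (auto intro!: holomorphic_intros convex_imp_contractible)
  moreover have "\<And>w. w \<in> ball 0 1 \<Longrightarrow> h w - a \<noteq> 0"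
    using a by force
  ultimately obtain k where holk: "k holomorphic_on ball 0 1"
    and hk: "\<And>w. w \<in> ball 0 1 \<Longrightarrow> h w - a = k w ^ 2"
    using contractible_imp_holomorphic_sqrt by blast
  have "norm (h z) = norm (a + k z ^ 2)"
    using hk[of z] z by (simp add: algebra_simps)
  also have "\<dots> \<le> norm a + norm (k z) ^ 2"
    by (metis norm_power norm_triangle_ineq)
  also have "\<dots> \<le> norm a + (norm (k 0) * B) ^ 2"
    using schlicht_sqrt_bound[OF assms(1) holk hk a z] by (intro add_left_mono power_mono) (auto simp: B_def)
  also have "\<dots> = norm a * (1 + B ^ 2)"
    using arg_cong[OF hk[of 0], of norm] h0 by (simp add: norm_power power_mult_distrib algebra_simps)
  also have "\<dots> \<le> 2 * (1 + B ^ 2)"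
    using a2 by (intro mult_right_mono) auto
  finally show ?thesis
    unfolding B_def schlicht_growth_const_def .
qed

lemma schlicht_rescale:
  assumes holg: "g holomorphic_on ball x \<rho>" and injg: "inj_on g (ball x \<rho>)" and \<rho>: "\<rho> > 0"
  defines "h \<equiv> \<lambda>w. (g (x + of_real \<rho> * w) - g x) / (of_real \<rho> * deriv g x)"
  shows "schlicht h"
    and "\<And>w. w \<in> ball 0 1 \<Longrightarrow> deriv h w = deriv g (x + of_real \<rho> * w) / deriv g x"
proof -
  have c: "deriv g x \<noteq> 0"
    using holomorphic_injective_imp_regular[OF holg open_ball injg] \<rho> by simp
  have inb: "x + of_real \<rho> * w \<in> ball x \<rho>" if "w \<in> ball 0 1" for w
    using that \<rho> by (simp add: dist_norm norm_mult)
  have Dh: "(h has_field_derivative deriv g (x + of_real \<rho> * w) / deriv g x) (at w)"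
    if "w \<in> ball 0 1" for w
  proof -
    have "(g has_field_derivative deriv g (x + of_real \<rho> * w)) (at (x + of_real \<rho> * w))"
      using holomorphic_derivI[OF holg open_ball inb[OF that]] .
    then have "((\<lambda>w. g (x + of_real \<rho> * w)) has_field_derivative
        deriv g (x + of_real \<rho> * w) * of_real \<rho>) (at w)"
      by (intro DERIV_chain2[where g = "\<lambda>w. x + of_real \<rho> * w"]) (auto intro!: derivative_eq_intros)
    then show ?thesis
      unfolding h_def using \<rho> c by (auto intro!: derivative_eq_intros simp: field_simps)
  qed
  show "deriv h w = deriv g (x + of_real \<rho> * w) / deriv g x" if "w \<in> ball 0 1" for w
    using DERIV_imp_deriv[OF Dh[OF that]] .
  have "h holomorphic_on ball 0 1"
    using Dh holomorphic_on_open[of "ball 0 1" h] by blast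
  moreover have "inj_on h (ball 0 1)"
  proof
    fix u v assume u: "u \<in> ball 0 1" and v: "v \<in> ball 0 1" and "h u = h v"
    then have "g (x + of_real \<rho> * u) = g (x + of_real \<rho> * v)"
      unfolding h_def using c \<rho> by (simp add: field_simps)
    then show "u = v"
      using injg inb[OF u] inb[OF v] \<rho> by (auto dest: inj_onD)
  qed
  moreover have "deriv h 0 = 1"
    using DERIV_imp_deriv[OF Dh[of 0]] c by simp
  ultimately show "schlicht h"
    unfolding schlicht_def h_def by simp
qed

lemma schlicht_deriv_bound:
  assumes "schlicht h" and w: "norm w \<le> 1/8"
  shows "norm (deriv h w) \<le> 8 * schlicht_growth_const"
proof -
  have holh: "h holomorphic_on ball 0 1"
    using assms by (simp add: schlicht_def)
  have near: "norm u \<le> 1/4" if "norm (w - u) \<le> 1/8" for u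
    using norm_triangle_ineq2[of u w] w that by (simp add: norm_minus_commute)
  have "cball w (1/8) \<subseteq> ball 0 1"
    using near by (force simp: dist_norm)
  then have hol: "h holomorphic_on cball w (1/8)"
    using holh by (rule holomorphic_on_subset[rotated])
  have "norm ((deriv ^^ 1) h w) \<le> fact 1 * schlicht_growth_const / (1/8) ^ 1"
  proof (rule Cauchy_inequality)
    show "h holomorphic_on ball w (1/8)"
      using hol ball_subset_cball by (rule holomorphic_on_subset)
    show "continuous_on (cball w (1/8)) h"
      using hol by (rule holomorphic_on_imp_continuous_on)
    show "norm (h u) \<le> schlicht_growth_const" if "norm (w - u) = 1/8" for u
      using schlicht_bound[OF assms(1) near] that by simp
  qed simp
  then show ?thesis
    by simp
qed

lemma univalent_disc_distortion:
  assumes holg: "g holomorphic_on ball x \<rho>" and injg: "inj_on g (ball x \<rho>)"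
    and \<rho>: "\<rho> > 0" and y: "norm (y - x) \<le> \<rho>/8"
  shows "norm (g y - g x) \<le> schlicht_growth_const * \<rho> * norm (deriv g x)"
    and "norm (deriv g y) \<le> 8 * schlicht_growth_const * norm (deriv g x)"
proof -
  define h where "h = (\<lambda>w. (g (x + of_real \<rho> * w) - g x) / (of_real \<rho> * deriv g x))"
  have h: "schlicht h"
    unfolding h_def by (rule schlicht_rescale(1)[OF holg injg \<rho>])
  have dh: "deriv h w = deriv g (x + of_real \<rho> * w) / deriv g x" if "w \<in> ball 0 1" for w
    unfolding h_def by (rule schlicht_rescale(2)[OF holg injg \<rho> that])
  have c: "deriv g x \<noteq> 0"
    using holomorphic_injective_imp_regular[OF holg open_ball injg] \<rho> by simp
  define w where "w = (y - x) / of_real \<rho>"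
  have yw: "x + of_real \<rho> * w = y"
    unfolding w_def using \<rho> by simp
  have "norm w = norm (y - x) / \<rho>"
    using \<rho> by (simp add: w_def norm_divide)
  also have "\<dots> \<le> 1/8"
    using y \<rho> by (simp add: divide_le_eq)
  finally have w: "norm w \<le> 1/8" .
  have "h w = (g y - g x) / (of_real \<rho> * deriv g x)"
    unfolding h_def yw ..
  then have "g y - g x = of_real \<rho> * deriv g x * h w"
    using c \<rho> by simp
  then have "norm (g y - g x) = \<rho> * norm (deriv g x) * norm (h w)"
    using \<rho> by (simp add: norm_mult)
  also have "\<dots> \<le> \<rho> * norm (deriv g x) * schlicht_growth_const"
    using schlicht_bound[OF h, of w] w \<rho> by (intro mult_left_mono) auto
  finally show "norm (g y - g x) \<le> schlicht_growth_const * \<rho> * norm (deriv g x)"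
    by (simp add: mult_ac)
  have "deriv h w = deriv g y / deriv g x"
    using dh[of w] w yw by simp
  then have "deriv g y = deriv g x * deriv h w"
    using c by simp
  then have "norm (deriv g y) = norm (deriv g x) * norm (deriv h w)"
    by (simp add: norm_mult)
  also have "\<dots> \<le> norm (deriv g x) * (8 * schlicht_growth_const)"
    using schlicht_deriv_bound[OF h w] by (intro mult_left_mono) auto
  finally show "norm (deriv g y) \<le> 8 * schlicht_growth_const * norm (deriv g x)"
    by (simp add: mult_ac)
qed

section \<open>Uniform distortion on compact subsets of a domain\<close>

definition univalent_comparable :: "complex set \<Rightarrow> real \<Rightarrow> complex \<Rightarrow> complex \<Rightarrow> bool" where
  "univalent_comparable U C x y \<longleftrightarrow>
     (\<forall>g. g holomorphic_on U \<longrightarrow> inj_on g U \<longrightarrow>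
        norm (g x - g y) \<le> C * norm (deriv g y) \<and>
        norm (deriv g x) \<le> C * norm (deriv g y) \<and> norm (deriv g y) \<le> C * norm (deriv g x))"

lemma univalent_comparableD:
  assumes "univalent_comparable U C x y" "g holomorphic_on U" "inj_on g U"
  shows "norm (g x - g y) \<le> C * norm (deriv g y)"
    and "norm (deriv g x) \<le> C * norm (deriv g y)"
    and "norm (deriv g y) \<le> C * norm (deriv g x)"
  using assms unfolding univalent_comparable_def by blast+

lemma univalent_comparable_mono:
  assumes "univalent_comparable U C x y" "C \<le> C'"
  shows "univalent_comparable U C' x y"
  unfolding univalent_comparable_def
proof (intro allI impI)
  fix g :: "complex \<Rightarrow> complex"
  assume g: "g holomorphic_on U" "inj_on g U"
  have "C * norm (deriv g y) \<le> C' * norm (deriv g y)" "C * norm (deriv g x) \<le> C' * norm (deriv g x)"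
    using assms(2) by (auto intro: mult_right_mono)
  then show "norm (g x - g y) \<le> C' * norm (deriv g y) \<and>
      norm (deriv g x) \<le> C' * norm (deriv g y) \<and> norm (deriv g y) \<le> C' * norm (deriv g x)"
    using univalent_comparableD[OF assms(1) g] by linarith
qed

lemma univalent_comparable_sym:
  assumes "univalent_comparable U C x y" "C \<ge> 0"
  shows "univalent_comparable U (C * C + C) y x"
  unfolding univalent_comparable_def
proof (intro allI impI conjI)
  fix g :: "complex \<Rightarrow> complex"
  assume g: "g holomorphic_on U" "inj_on g U"
  note c = univalent_comparableD[OF assms(1) g]
  have nonneg: "0 \<le> C * norm (deriv g x)" "0 \<le> C * norm (deriv g y)"
    using assms(2) by simp_all
  have "norm (g y - g x) \<le> C * (C * norm (deriv g x))"
    using c(1) mult_left_mono[OF c(3) assms(2)] by (simp add: norm_minus_commute)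
  then show "norm (g y - g x) \<le> (C * C + C) * norm (deriv g x)"
    using nonneg by (simp add: algebra_simps)
  have "(C * C + C) * norm (deriv g x) = C * (C * norm (deriv g x)) + C * norm (deriv g x)"
    "(C * C + C) * norm (deriv g y) = C * (C * norm (deriv g y)) + C * norm (deriv g y)"
    by (simp_all add: algebra_simps)
  then show "norm (deriv g y) \<le> (C * C + C) * norm (deriv g x)"
    "norm (deriv g x) \<le> (C * C + C) * norm (deriv g y)"
    using c(2,3) mult_nonneg_nonneg[OF assms(2) nonneg(1)] mult_nonneg_nonneg[OF assms(2) nonneg(2)]
    by linarith+
qed

lemma univalent_comparable_trans:
  assumes "univalent_comparable U C x y" "univalent_comparable U C' y z" "C \<ge> 0" "C' \<ge> 0"
  shows "univalent_comparable U (C * C' + C') x z"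
  unfolding univalent_comparable_def
proof (intro allI impI conjI)
  fix g :: "complex \<Rightarrow> complex"
  assume g: "g holomorphic_on U" "inj_on g U"
  note c = univalent_comparableD[OF assms(1) g] and c' = univalent_comparableD[OF assms(2) g]
  have nonneg: "0 \<le> C' * norm (deriv g z)" "0 \<le> C' * norm (deriv g x)"
    using assms(4) by simp_all
  have yz: "C * norm (deriv g y) \<le> C * (C' * norm (deriv g z))"
    using c'(2) assms(3) by (rule mult_left_mono)
  have "norm (g x - g z) \<le> norm (g x - g y) + norm (g y - g z)"
    using norm_triangle_ineq[of "g x - g y" "g y - g z"] by simp
  also have "\<dots> \<le> C * (C' * norm (deriv g z)) + C' * norm (deriv g z)"
    using c(1) c'(1) yz by linarith
  finally show "norm (g x - g z) \<le> (C * C' + C') * norm (deriv g z)"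
    by (simp add: algebra_simps)
  show "norm (deriv g x) \<le> (C * C' + C') * norm (deriv g z)"
    using c(2) yz nonneg(1) by (simp add: algebra_simps)
  have "C' * norm (deriv g y) \<le> C' * (C * norm (deriv g x))"
    using c(3) assms(4) by (rule mult_left_mono)
  then show "norm (deriv g z) \<le> (C * C' + C') * norm (deriv g x)"
    using c'(3) nonneg(2) by (simp add: algebra_simps)
qed

lemma univalent_comparable_near:
  assumes "open U" "x \<in> U"
  obtains r C where "r > 0" "C \<ge> 0" "ball x r \<subseteq> U"
    "\<And>y. y \<in> ball x r \<Longrightarrow> univalent_comparable U C y x"
proof -
  obtain \<rho> where \<rho>: "\<rho> > 0" and sub: "ball x \<rho> \<subseteq> U"
    using assms openE by blast
  define K where "K = schlicht_growth_const"
  have K: "K > 0"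
    unfolding K_def by (rule schlicht_growth_const_pos)
  have "univalent_comparable U (K * \<rho> + 8 * K) y x" if y: "y \<in> ball x (\<rho>/16)" for y
    unfolding univalent_comparable_def
  proof (intro allI impI)
    fix g :: "complex \<Rightarrow> complex"
    assume g: "g holomorphic_on U" "inj_on g U"
    have dxy: "norm (x - y) < \<rho>/16"
      using y by (simp add: dist_norm)
    then have yx: "norm (y - x) \<le> \<rho>/8" and xy: "norm (x - y) \<le> (\<rho>/2)/8"
      unfolding norm_minus_commute[of y x] using norm_ge_zero[of "x - y"] by linarith+
    have "ball y (\<rho>/2) \<subseteq> ball x \<rho>"
    proof
      fix u
      assume "u \<in> ball y (\<rho>/2)"
      then show "u \<in> ball x \<rho>"
        using y \<rho> dist_triangle[of x u y] unfolding mem_ball by linarith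
    qed
    then have sub': "ball y (\<rho>/2) \<subseteq> U"
      using sub by blast
    have e1: "norm (g y - g x) \<le> K * \<rho> * norm (deriv g x)"
      and e2: "norm (deriv g y) \<le> 8 * K * norm (deriv g x)"
      using univalent_disc_distortion[OF holomorphic_on_subset[OF g(1) sub] inj_on_subset[OF g(2) sub] \<rho> yx]
      unfolding K_def by auto
    have e3: "norm (deriv g x) \<le> 8 * K * norm (deriv g y)"
      using univalent_disc_distortion(2)[OF holomorphic_on_subset[OF g(1) sub']
          inj_on_subset[OF g(2) sub'] _ xy] \<rho>
      unfolding K_def by simp
    have "0 \<le> K * \<rho> * norm (deriv g x)" "0 \<le> K * \<rho> * norm (deriv g y)"
      "0 \<le> 8 * K * norm (deriv g x)" "0 \<le> 8 * K * norm (deriv g y)"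
      using K \<rho> by simp_all
    then show "norm (g y - g x) \<le> (K * \<rho> + 8 * K) * norm (deriv g x) \<and>
        norm (deriv g y) \<le> (K * \<rho> + 8 * K) * norm (deriv g x) \<and>
        norm (deriv g x) \<le> (K * \<rho> + 8 * K) * norm (deriv g y)"
      using e1 e2 e3 by (simp add: distrib_right)
  qed
  moreover have "ball x (\<rho>/16) \<subseteq> U"
    using sub subset_ball[of "\<rho>/16" \<rho> x] \<rho> by simp
  moreover have "\<rho>/16 > 0" "K * \<rho> + 8 * K \<ge> 0"
    using \<rho> K by simp_all
  ultimately show ?thesis
    using that by blast
qed

lemma univalent_comparable_connected:
  assumes "open U" "connected U" "x \<in> U" "y \<in> U"
  shows "\<exists>C\<ge>0. univalent_comparable U C x y"
proof -
  define R where "R a b \<longleftrightarrow> (\<exists>C\<ge>0. univalent_comparable U C a b)" for a b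
  have "R x y"
  proof (rule connected_equivalence_relation[OF assms(2-4)])
    show "R b a" if ab: "R a b" for a b
    proof -
      obtain C where C: "C \<ge> 0" "univalent_comparable U C a b"
        using ab unfolding R_def by blast
      have "univalent_comparable U (C * C + C) b a"
        using univalent_comparable_sym[OF C(2,1)] .
      then show ?thesis
        unfolding R_def using C(1) by (intro exI[of _ "C * C + C"]) simp
    qed
    show "R a c" if ab: "R a b" and bc: "R b c" for a b c
    proof -
      obtain C C' where C: "C \<ge> 0" "univalent_comparable U C a b"
        and C': "C' \<ge> 0" "univalent_comparable U C' b c"
        using ab bc unfolding R_def by blast
      have "univalent_comparable U (C * C' + C') a c"
        using univalent_comparable_trans[OF C(2) C'(2) C(1) C'(1)] .
      then show ?thesis
        unfolding R_def using C(1) C'(1) by (intro exI[of _ "C * C' + C'"]) simp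
    qed
    fix a
    assume a: "a \<in> U"
    obtain r C where "r > 0" "C \<ge> 0" "ball a r \<subseteq> U"
      and near: "\<And>y. y \<in> ball a r \<Longrightarrow> univalent_comparable U C y a"
      using univalent_comparable_near[OF assms(1) a] by metis
    have "R a y" if "y \<in> ball a r" for y
      unfolding R_def using univalent_comparable_sym[OF near[OF that] \<open>C \<ge> 0\<close>] \<open>C \<ge> 0\<close>
      by (intro exI[of _ "C * C + C"]) simp
    moreover have "openin (top_of_set U) (ball a r)"
      using \<open>ball a r \<subseteq> U\<close> by (intro open_subset) simp_all
    ultimately show "\<exists>T. openin (top_of_set U) T \<and> a \<in> T \<and> (\<forall>y\<in>T. R a y)"
      using \<open>r > 0\<close> by (intro exI[of _ "ball a r"]) simp
  qed
  then show ?thesis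
    unfolding R_def .
qed

lemma compact_uniform_constant:
  fixes P :: "real \<Rightarrow> 'a::topological_space \<Rightarrow> bool"
  assumes "compact E"
    and local: "\<And>x. x \<in> E \<Longrightarrow> \<exists>W C. open W \<and> x \<in> W \<and> (\<forall>y\<in>W. P C y)"
    and mono: "\<And>C C' y. P C y \<Longrightarrow> C \<le> C' \<Longrightarrow> P C' y"
  shows "\<exists>C. \<forall>y\<in>E. P C y"
proof -
  obtain W C where WC: "\<And>x. x \<in> E \<Longrightarrow> open (W x) \<and> x \<in> W x \<and> (\<forall>y\<in>W x. P (C x) y)"
    using local by metis
  obtain D where D: "D \<subseteq> E" "finite D" "E \<subseteq> (\<Union>x\<in>D. W x)"
    using compactE_image[OF assms(1), of E W] WC by blast
  have "P (Max (C ` D)) y" if "y \<in> E" for y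
  proof -
    obtain x where x: "x \<in> D" "y \<in> W x"
      using D \<open>y \<in> E\<close> by blast
    have "P (C x) y"
      using WC[of x] x D(1) by blast
    moreover have "C x \<le> Max (C ` D)"
      using D(2) x(1) by simp
    ultimately show "P (Max (C ` D)) y"
      by (rule mono)
  qed
  then show ?thesis
    by blast
qed

lemma univalent_comparable_uniform:
  assumes "open U" "connected U" "compact E" "E \<subseteq> U" "z0 \<in> U"
  shows "\<exists>C\<ge>0. \<forall>y\<in>E. univalent_comparable U C y z0"
proof -
  let ?P = "\<lambda>C y. C \<ge> 0 \<and> univalent_comparable U C y z0"
  have loc: "\<exists>W C. open W \<and> x \<in> W \<and> (\<forall>y\<in>W. ?P C y)" if x: "x \<in> E" for x
  proof -
    have xU: "x \<in> U"
      using x assms(4) by blast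
    obtain r C where r: "r > 0" and C: "C \<ge> 0"
      and near: "\<And>y. y \<in> ball x r \<Longrightarrow> univalent_comparable U C y x"
      using univalent_comparable_near[OF assms(1) xU] by metis
    obtain C' where C': "C' \<ge> 0" "univalent_comparable U C' x z0"
      using univalent_comparable_connected[OF assms(1,2) xU assms(5)] by blast
    have "?P (C * C' + C') y" if "y \<in> ball x r" for y
      using univalent_comparable_trans[OF near[OF that] C'(2) C C'(1)] C C'(1) by simp
    then show ?thesis
      using r by (intro exI[of _ "ball x r"] exI[of _ "C * C' + C'"]) simp
  qed
  have mono: "?P C' y" if "?P C y" "C \<le> C'" for C C' y
    using that univalent_comparable_mono[of U C y z0 C'] by simp
  obtain C where C: "\<forall>y\<in>E. ?P C y"
    using compact_uniform_constant[OF assms(3) loc mono] ..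
  have "univalent_comparable U (max C 0) y z0" if "y \<in> E" for y
    using univalent_comparable_mono[of U C y z0 "max C 0"] C that by simp
  then show ?thesis
    by (intro exI[of _ "max C 0"]) simp
qed

lemma univalent_lipschitz_near:
  assumes g: "g holomorphic_on ball z \<rho>" "inj_on g (ball z \<rho>)" and w: "norm (w - z) \<le> \<rho>/8"
  shows "norm (g w - g z) \<le> 8 * schlicht_growth_const * norm (deriv g z) * norm (w - z)"
proof (cases "w = z")
  case False
  define \<rho>' where "\<rho>' = 8 * norm (w - z)"
  have "ball z \<rho>' \<subseteq> ball z \<rho>"
    using w by (intro subset_ball) (simp add: \<rho>'_def)
  then have "norm (g w - g z) \<le> schlicht_growth_const * \<rho>' * norm (deriv g z)"
    using False
    by (intro univalent_disc_distortion(1) holomorphic_on_subset[OF g(1)] inj_on_subset[OF g(2)])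
      (auto simp: \<rho>'_def)
  then show ?thesis
    by (simp add: \<rho>'_def mult_ac)
qed simp

lemma univalent_comparable_lipschitz:
  assumes K: "K \<ge> 0" "univalent_comparable U K z z0" "univalent_comparable U K w z0"
    and r: "r > 0" "ball z r \<subseteq> U" and g: "g holomorphic_on U" "inj_on g U"
  shows "norm (g z - g w) \<le> (8 * schlicht_growth_const * K + 16 * K / r) * norm (deriv g z0) * norm (z - w)"
proof -
  note cz = univalent_comparableD[OF K(2) g] and cw = univalent_comparableD[OF K(3) g]
  have nonneg: "0 \<le> 8 * schlicht_growth_const * K * norm (deriv g z0) * norm (z - w)"
    "0 \<le> 16 * K / r * norm (deriv g z0) * norm (z - w)"
    using K(1) r(1) schlicht_growth_const_pos by simp_all
  show ?thesis
  proof (cases "norm (z - w) \<le> r/8")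
    case True
    have "norm (g w - g z) \<le> 8 * schlicht_growth_const * norm (deriv g z) * norm (w - z)"
      using True r(2)
      by (intro univalent_lipschitz_near holomorphic_on_subset[OF g(1)] inj_on_subset[OF g(2)])
        (auto simp: norm_minus_commute)
    also have "\<dots> \<le> 8 * schlicht_growth_const * (K * norm (deriv g z0)) * norm (w - z)"
      using cz(2) schlicht_growth_const_pos by (intro mult_right_mono mult_left_mono) auto
    finally have "norm (g z - g w) \<le> 8 * schlicht_growth_const * K * norm (deriv g z0) * norm (z - w)"
      by (simp add: norm_minus_commute mult_ac)
    then show ?thesis
      using nonneg(2) unfolding distrib_right by linarith
  next
    case False
    have "norm (g z - g w) \<le> norm (g z - g z0) + norm (g w - g z0)"
      using norm_triangle_ineq4[of "g z - g z0" "g w - g z0"] by simp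
    also have "\<dots> \<le> 2 * K * norm (deriv g z0)"
      using cz(1) cw(1) by simp
    also have "\<dots> \<le> 2 * K * norm (deriv g z0) * ((8 / r) * norm (z - w))"
    proof -
      have "1 \<le> (8 / r) * norm (z - w)"
        using False r(1) by (simp add: field_simps)
      moreover have "0 \<le> 2 * K * norm (deriv g z0)"
        using K(1) by simp
      ultimately show ?thesis
        using mult_left_mono by (metis mult_1_right)
    qed
    finally have "norm (g z - g w) \<le> 16 * K / r * norm (deriv g z0) * norm (z - w)"
      by simp
    then show ?thesis
      using nonneg(1) unfolding distrib_right by linarith
  qed
qed

lemma univalent_uniform_distortion:
  assumes U: "open U" "connected U" and E: "compact E" "E \<subseteq> U" and z0: "z0 \<in> E"
  obtains L where "L > 0"
    "\<And>g z w. g holomorphic_on U \<Longrightarrow> inj_on g U \<Longrightarrow> z \<in> E \<Longrightarrow> w \<in> E \<Longrightarrow>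
       norm (g z - g w) \<le> L * norm (deriv g z0) * norm (z - w)"
    "\<And>g y. g holomorphic_on U \<Longrightarrow> inj_on g U \<Longrightarrow> y \<in> E \<Longrightarrow>
       norm (deriv g z0) \<le> L * norm (deriv g y)"
proof -
  obtain K where K: "K \<ge> 0" "\<And>y. y \<in> E \<Longrightarrow> univalent_comparable U K y z0"
    using univalent_comparable_uniform[OF U E] z0 E(2) by blast
  obtain r where r: "r > 0" "(\<Union>x\<in>E. ball x r) \<subseteq> U"
    using compact_subset_open_imp_ball_epsilon_subset[OF E(1) U(1) E(2)] by blast
  define \<Lambda> where "\<Lambda> = 8 * schlicht_growth_const * K + 16 * K / r"
  have "0 \<le> \<Lambda>"
    using K(1) r(1) schlicht_growth_const_pos by (simp add: \<Lambda>_def)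
  show ?thesis
  proof (rule that[of "\<Lambda> + K + 1"])
    fix g z w
    assume g: "g holomorphic_on U" "inj_on g U" and z: "z \<in> E" and w: "w \<in> E"
    have "norm (g z - g w) \<le> \<Lambda> * norm (deriv g z0) * norm (z - w)"
      unfolding \<Lambda>_def using r(2) z
      by (intro univalent_comparable_lipschitz[OF K(1) K(2)[OF z] K(2)[OF w] r(1) _ g]) blast
    also have "\<dots> \<le> (\<Lambda> + K + 1) * norm (deriv g z0) * norm (z - w)"
      using K(1) by (intro mult_right_mono) auto
    finally show "norm (g z - g w) \<le> (\<Lambda> + K + 1) * norm (deriv g z0) * norm (z - w)" .
  next
    fix g y
    assume g: "g holomorphic_on U" "inj_on g U" and y: "y \<in> E"
    have "norm (deriv g z0) \<le> K * norm (deriv g y)"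
      using univalent_comparableD(3)[OF K(2)[OF y] g] .
    also have "\<dots> \<le> (\<Lambda> + K + 1) * norm (deriv g y)"
      using \<open>0 \<le> \<Lambda>\<close> by (intro mult_right_mono) auto
    finally show "norm (deriv g z0) \<le> (\<Lambda> + K + 1) * norm (deriv g y)" .
  qed (use \<open>0 \<le> \<Lambda>\<close> K(1) in simp)
qed

section \<open>Covering numbers\<close>

definition delta_cover :: "real \<Rightarrow> complex set set \<Rightarrow> complex set \<Rightarrow> bool" where
  "delta_cover \<delta> F A \<longleftrightarrow> finite F \<and> (\<forall>V\<in>F. open V \<and> bounded V \<and> diameter V \<le> \<delta>) \<and> A \<subseteq> \<Union>F"

lemma covnum_eq_Inf_delta_cover: "covnum \<delta> A = Inf {card F | F. delta_cover \<delta> F A}"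
  by (simp add: covnum_def delta_cover_def)

lemma covnum_le_card:
  assumes "delta_cover \<delta> F A"
  shows "covnum \<delta> A \<le> card F"
  unfolding covnum_eq_Inf_delta_cover by (rule cInf_lower) (use assms in auto)

lemma delta_cover_subset: "delta_cover \<delta> G A \<Longrightarrow> B \<subseteq> A \<Longrightarrow> delta_cover \<delta> G B"
  unfolding delta_cover_def by blast

lemma delta_cover_UN:
  assumes "finite I" "\<And>i. i \<in> I \<Longrightarrow> delta_cover \<delta> (G i) (A i)"
  shows "delta_cover \<delta> (\<Union>i\<in>I. G i) (\<Union>i\<in>I. A i)"
proof -
  have fin: "finite (G i)" and small: "\<forall>V\<in>G i. open V \<and> bounded V \<and> diameter V \<le> \<delta>"
    and cov: "A i \<subseteq> \<Union>(G i)" if "i \<in> I" for i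
    using assms(2)[OF that] by (simp_all add: delta_cover_def)
  show ?thesis
    unfolding delta_cover_def
  proof (intro conjI)
    show "finite (\<Union>i\<in>I. G i)"
      using assms(1) fin by simp
    show "\<forall>V\<in>\<Union>i\<in>I. G i. open V \<and> bounded V \<and> diameter V \<le> \<delta>"
      using small by blast
    show "(\<Union>i\<in>I. A i) \<subseteq> \<Union>(\<Union>i\<in>I. G i)"
      using cov by blast
  qed
qed

lemma delta_cover_ball_centres:
  assumes "\<delta> > 0" "finite D" "A \<subseteq> (\<Union>x\<in>D. ball x (\<delta>/2))"
  shows "delta_cover \<delta> ((\<lambda>x. ball x (\<delta>/2)) ` D) A"
  using assms by (auto simp: delta_cover_def)

lemma compact_finite_ball_cover:
  fixes A :: "'a::metric_space set"
  assumes "compact A" "r > 0"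
  obtains D where "finite D" "A \<subseteq> (\<Union>x\<in>D. ball x r)"
proof -
  have "A \<subseteq> (\<Union>x\<in>A. ball x r)"
    using assms(2) by auto
  then obtain D where "D \<subseteq> A" "finite D" "A \<subseteq> (\<Union>x\<in>D. ball x r)"
    using compactE_image[OF assms(1), of A "\<lambda>x. ball x r"] by blast
  then show ?thesis
    using that by blast
qed

lemma delta_cover_compact:
  assumes "compact A" "\<delta> > 0"
  obtains F where "delta_cover \<delta> F A"
proof -
  obtain D where "finite D" "A \<subseteq> (\<Union>x\<in>D. ball x (\<delta>/2))"
    using compact_finite_ball_cover[OF assms(1), of "\<delta>/2"] assms(2) by auto
  then show ?thesis
    using that delta_cover_ball_centres[OF assms(2)] by blast
qed

lemma covnum_attained:
  assumes "compact A" "\<delta> > 0"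
  obtains F where "delta_cover \<delta> F A" "card F = covnum \<delta> A"
proof -
  let ?N = "{card F | F. delta_cover \<delta> F A}"
  obtain F where "delta_cover \<delta> F A"
    using delta_cover_compact[OF assms] .
  then have "Inf ?N \<in> ?N"
    by (intro Inf_nat_def1) blast
  then obtain F where "delta_cover \<delta> F A" "card F = Inf ?N"
    by auto
  then show ?thesis
    using that unfolding covnum_eq_Inf_delta_cover by blast
qed

lemma cball_delta_cover_card_bound:
  fixes K :: real
  obtains m :: nat where "\<And>c \<delta>. \<delta> > 0 \<Longrightarrow> \<exists>G. delta_cover \<delta> G (cball c (K * \<delta>)) \<and> card G \<le> m"
proof -
  obtain D where D: "finite D" "cball (0::complex) K \<subseteq> (\<Union>a\<in>D. ball a (1/2))"
    using compact_finite_ball_cover[OF compact_cball, of "1/2" 0 K] by auto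
  \<comment> \<open>Rescaling a cover of \<open>cball 0 K\<close> by balls of radius \<open>1/2\<close>.\<close>
  have "\<exists>G. delta_cover \<delta> G (cball c (K * \<delta>)) \<and> card G \<le> card D" if \<delta>: "\<delta> > 0" for c \<delta>
  proof (intro exI conjI)
    let ?D = "(\<lambda>a. c + of_real \<delta> * a) ` D"
    have "cball c (K * \<delta>) \<subseteq> (\<Union>x\<in>?D. ball x (\<delta>/2))"
    proof
      fix y
      assume y: "y \<in> cball c (K * \<delta>)"
      define u where "u = (y - c) / of_real \<delta>"
      have yu: "y = c + of_real \<delta> * u"
        using \<delta> by (simp add: u_def)
      have "norm (y - c) \<le> K * \<delta>"
        using y norm_minus_commute[of c y] by (simp add: dist_norm)
      then have "norm u \<le> K"
        using \<delta> by (simp add: u_def norm_divide divide_le_eq)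
      then obtain a where a: "a \<in> D" "dist a u < 1/2"
        using D(2) by auto
      have "c + of_real \<delta> * a - y = of_real \<delta> * (a - u)"
        by (simp add: yu algebra_simps)
      then have "dist (c + of_real \<delta> * a) y = \<delta> * dist a u"
        using \<delta> by (simp add: dist_norm norm_mult)
      also have "\<dots> < \<delta>/2"
        using a(2) \<delta> by simp
      finally show "y \<in> (\<Union>x\<in>?D. ball x (\<delta>/2))"
        using a(1) by auto
    qed
    then show "delta_cover \<delta> ((\<lambda>x. ball x (\<delta>/2)) ` ?D) (cball c (K * \<delta>))"
      using D(1) by (intro delta_cover_ball_centres[OF \<delta>]) simp_all
    show "card ((\<lambda>x. ball x (\<delta>/2)) ` ?D) \<le> card D"
      using D(1) by (metis card_image_le finite_imageI image_image)
  qed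
  then show ?thesis
    by (rule that)
qed

lemma covnum_image_le:
  assumes E: "compact E" and \<epsilon>: "\<epsilon> > 0"
    and f: "\<And>z w. z \<in> E \<Longrightarrow> w \<in> E \<Longrightarrow> dist z w \<le> \<epsilon> \<Longrightarrow> dist (f z) (f w) \<le> r"
    and cov: "\<And>c. \<exists>G. delta_cover \<delta> G (cball c r) \<and> card G \<le> m"
  shows "covnum \<delta> (f ` E) \<le> m * covnum \<epsilon> E"
proof -
  obtain F where F: "delta_cover \<epsilon> F E" "card F = covnum \<epsilon> E"
    using covnum_attained[OF E \<epsilon>] .
  have "\<exists>G. delta_cover \<delta> G (f ` (V \<inter> E)) \<and> card G \<le> m" if V: "V \<in> F" for V
  proof (cases "V \<inter> E = {}")
    case True
    then show ?thesis
      by (intro exI[of _ "{}"]) (simp add: delta_cover_def)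
  next
    case False
    then obtain x where x: "x \<in> V" "x \<in> E"
      by blast
    obtain G where G: "delta_cover \<delta> G (cball (f x) r)" "card G \<le> m"
      using cov by blast
    have "f z \<in> cball (f x) r" if z: "z \<in> V" "z \<in> E" for z
    proof -
      have "bounded V" "diameter V \<le> \<epsilon>"
        using F(1) V by (simp_all add: delta_cover_def)
      then have "dist x z \<le> \<epsilon>"
        using diameter_bounded_bound[of V x z] x(1) z(1) by simp
      then show ?thesis
        using f[OF x(2) z(2)] by simp
    qed
    then have "f ` (V \<inter> E) \<subseteq> cball (f x) r"
      by blast
    then have "delta_cover \<delta> G (f ` (V \<inter> E))"
      by (rule delta_cover_subset[OF G(1)])
    then show ?thesis
      using G(2) by blast
  qed
  then have "\<forall>V\<in>F. \<exists>G. delta_cover \<delta> G (f ` (V \<inter> E)) \<and> card G \<le> m"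
    by blast
  from bchoice[OF this] obtain G where G: "\<forall>V\<in>F. delta_cover \<delta> (G V) (f ` (V \<inter> E)) \<and> card (G V) \<le> m"
    by blast
  have finF: "finite F" and EF: "E \<subseteq> \<Union>F"
    using F(1) by (auto simp: delta_cover_def)
  have "delta_cover \<delta> (\<Union>V\<in>F. G V) (\<Union>V\<in>F. f ` (V \<inter> E))"
    using G by (intro delta_cover_UN[OF finF]) simp
  moreover have "f ` E \<subseteq> (\<Union>V\<in>F. f ` (V \<inter> E))"
    using EF by blast
  ultimately have "delta_cover \<delta> (\<Union>V\<in>F. G V) (f ` E)"
    by (rule delta_cover_subset)
  then have "covnum \<delta> (f ` E) \<le> card (\<Union>V\<in>F. G V)"
    by (rule covnum_le_card)
  also have "\<dots> \<le> (\<Sum>V\<in>F. card (G V))"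
    using finF by (rule card_UN_le)
  also have "\<dots> \<le> card F * m"
    using sum_bounded_above[of F "\<lambda>V. card (G V)" m] G by simp
  finally show ?thesis
    using F(2) by (simp add: mult.commute)
qed

lemma reciprocal_lipschitz:
  assumes E: "compact E" and contg: "continuous_on E g" and nz: "\<And>y. y \<in> E \<Longrightarrow> g y \<noteq> 0"
    and lip: "\<And>z w. z \<in> E \<Longrightarrow> w \<in> E \<Longrightarrow> norm (g z - g w) \<le> L * D * norm (z - w)"
    and low: "\<And>y. y \<in> E \<Longrightarrow> D \<le> L * norm (deriv g y)"
    and M: "\<And>y. y \<in> E \<Longrightarrow> norm (deriv g y) / norm (g y) ^ 2 \<le> M"
    and L: "L \<ge> 0" and z: "z \<in> E" and w: "w \<in> E"
  shows "norm (1 / g z - 1 / g w) \<le> L * L * M * norm (z - w)"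
proof -
  \<comment> \<open>Bound the denominators by the point where \<open>norm g\<close> is smallest.\<close>
  obtain y where y: "y \<in> E" and ymin: "\<And>u. u \<in> E \<Longrightarrow> norm (g y) \<le> norm (g u)"
    using continuous_attains_inf[OF E _ continuous_on_norm[OF contg]] z by blast
  define m where "m = norm (g y)"
  have m: "m > 0" "m \<le> norm (g z)" "m \<le> norm (g w)"
    using nz[OF y] ymin[OF z] ymin[OF w] by (simp_all add: m_def)
  have "norm (1 / g z - 1 / g w) = norm (g w - g z) / (norm (g z) * norm (g w))"
    using nz[OF z] nz[OF w] by (simp add: field_simps norm_divide norm_mult)
  also have "\<dots> \<le> norm (g w - g z) / (m * m)"
    using m by (intro divide_left_mono mult_mono mult_pos_pos) auto
  also have "\<dots> \<le> L * D * norm (z - w) / (m * m)"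
    using lip[OF w z] m by (intro divide_right_mono) (auto simp: norm_minus_commute)
  also have "\<dots> \<le> L * (L * norm (deriv g y)) * norm (z - w) / (m * m)"
    using low[OF y] L m by (intro divide_right_mono mult_right_mono mult_left_mono) auto
  also have "\<dots> = L * L * (norm (deriv g y) / norm (g y) ^ 2) * norm (z - w)"
    by (simp add: m_def power2_eq_square)
  also have "\<dots> \<le> L * L * M * norm (z - w)"
    using M[OF y] L by (intro mult_right_mono mult_left_mono) auto
  finally show ?thesis .
qed

section \<open>Univalent maps into the sphere and inverse branches\<close>

lemma sph_holomorphic_reciprocal:
  assumes U: "open U" and S: "sph_holomorphic_on S U" and omit: "\<forall>w\<in>U. S w \<noteq> Some b"
  shows "(\<lambda>w. case S w of None \<Rightarrow> 0 | Some v \<Rightarrow> 1 / (v - b)) holomorphic_on U"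
proof -
  define g where "g w = (case S w of None \<Rightarrow> 0 | Some v \<Rightarrow> 1 / (v - b))" for w
  have "\<exists>e>0. g holomorphic_on ball z e" if z: "z \<in> U" for z
  proof -
    obtain r h where r: "r > 0" and holh: "h holomorphic_on ball z r"
      and chart: "(\<forall>w\<in>ball z r. S w = Some (h w)) \<or>
        (\<forall>w\<in>ball z r. (h w = 0 \<longrightarrow> S w = None) \<and> (h w \<noteq> 0 \<longrightarrow> S w = Some (1 / h w)))"
      using S z unfolding sph_holomorphic_on_def by blast
    obtain r' where r': "r' > 0" "ball z r' \<subseteq> U"
      using U z openE by blast
    define s where "s = min r r'"
    have s: "ball z s \<subseteq> ball z r" "ball z s \<subseteq> U"
      using r' by (auto simp: s_def)
    have "s > 0"
      using r r'(1) by (simp add: s_def)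
    from chart have "g holomorphic_on ball z s"
    proof
      assume c: "\<forall>w\<in>ball z r. S w = Some (h w)"
      have "h w \<noteq> b" if "w \<in> ball z s" for w
        using c omit s that by force
      then have "(\<lambda>w. 1 / (h w - b)) holomorphic_on ball z s"
        using holomorphic_on_subset[OF holh s(1)] by (intro holomorphic_intros) auto
      then show ?thesis
        by (rule holomorphic_transform) (use c s in \<open>auto simp: g_def\<close>)
    next
      assume c: "\<forall>w\<in>ball z r. (h w = 0 \<longrightarrow> S w = None) \<and> (h w \<noteq> 0 \<longrightarrow> S w = Some (1 / h w))"
      have nb: "1 - b * h w \<noteq> 0" if "w \<in> ball z s" for w
      proof
        assume bh: "1 - b * h w = 0"
        then have "h w \<noteq> 0"
          by auto
        then have "h w \<noteq> 0" "1 / h w = b"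
          using bh by (simp_all add: field_simps)
        then show False
          using c omit s that by force
      qed
      then have "(\<lambda>w. h w / (1 - b * h w)) holomorphic_on ball z s"
        using holomorphic_on_subset[OF holh s(1)] by (intro holomorphic_intros) auto
      moreover have "h w / (1 - b * h w) = g w" if "w \<in> ball z s" for w
        using c s that nb[OF that] by (cases "h w = 0") (auto simp: g_def field_simps)
      ultimately show ?thesis
        by (rule holomorphic_transform)
    qed
    then show ?thesis
      using \<open>s > 0\<close> by blast
  qed
  then have "g analytic_on U"
    by (simp add: analytic_on_def)
  then show ?thesis
    unfolding g_def by (rule analytic_imp_holomorphic)
qed

lemma inj_on_sph_reciprocal:
  fixes S :: "complex \<Rightarrow> sphere"
  assumes "inj_on S U" "\<forall>w\<in>U. S w \<noteq> Some b"
  shows "inj_on (\<lambda>w. case S w of None \<Rightarrow> 0 | Some v \<Rightarrow> 1 / (v - b)) U"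
proof -
  have "inj_on (\<lambda>x. case x of None \<Rightarrow> 0 | Some v \<Rightarrow> 1 / (v - b)) (- {Some b})"
    by (auto simp: inj_on_def split: option.splits)
  then have "inj_on (\<lambda>x. case x of None \<Rightarrow> 0 | Some v \<Rightarrow> 1 / (v - b)) (S ` U)"
    by (rule inj_on_subset) (use assms(2) in auto)
  then show ?thesis
    using comp_inj_on[OF assms(1)] by (simp add: o_def)
qed

lemma deriv_shifted_reciprocal:
  assumes U: "open U" and g: "g holomorphic_on U" and y: "y \<in> U" "g y \<noteq> 0"
    and f: "\<And>w. w \<in> U \<Longrightarrow> g w \<noteq> 0 \<Longrightarrow> f w = b + 1 / g w"
  shows "deriv f y = - deriv g y / g y ^ 2"
proof -
  define V where "V = U \<inter> g -` (- {0})"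
  have V: "open V" "y \<in> V"
    using continuous_open_preimage[OF holomorphic_on_imp_continuous_on[OF g] U, of "- {0}"] y
    by (auto simp: V_def)
  have "((\<lambda>w. b + 1 / g w) has_field_derivative - deriv g y / g y ^ 2) (at y)"
    using holomorphic_derivI[OF g U y(1)] y(2)
    by (auto intro!: derivative_eq_intros simp: power2_eq_square field_simps)
  then have "(f has_field_derivative - deriv g y / g y ^ 2) (at y)"
    by (rule has_field_derivative_transform_within_open[OF _ V]) (auto simp: V_def f)
  then show ?thesis
    by (rule DERIV_imp_deriv)
qed

lemma bounded_orbital_set_not_None:
  assumes "bounded_in_plane (orbital_set T E)" "(T ^^ k) x = Some z" "z \<in> E"
  shows "x \<noteq> None"
proof -
  have "x \<in> orbital_set T E"
    unfolding orbital_set_def using assms(2,3) by blast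
  then show ?thesis
    using assms(1) unfolding bounded_in_plane_def by metis
qed

lemma inverse_branch_omits_value:
  assumes inv: "\<And>j w. j \<in> J \<Longrightarrow> w \<in> U \<Longrightarrow> F (S j w) = Some w"
    and inj: "inj_on (\<lambda>j. S j z0) J" and fin: "\<And>j. j \<in> J \<Longrightarrow> S j z0 \<noteq> None"
    and z0: "z0 \<in> U" and j: "j \<in> J" and J: "2 \<le> card J"
  shows "\<exists>b. \<forall>w\<in>U. S j w \<noteq> Some b"
proof -
  have "\<not> J \<subseteq> {j}"
    using card_mono[of "{j}" J] J by auto
  then obtain j' where j': "j' \<in> J" "j' \<noteq> j"
    by blast
  obtain b where b: "S j' z0 = Some b"
    using fin[OF j'(1)] by blast
  \<comment> \<open>\<open>S j w = S j' z0\<close> forces \<open>w = z0\<close> after applying \<open>F\<close>, and then \<open>j = j'\<close>.\<close>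
  have "S j w \<noteq> Some b" if w: "w \<in> U" for w
  proof
    assume eq: "S j w = Some b"
    have "Some w = F (S j w)"
      using inv j w by simp
    also have "\<dots> = Some z0"
      using eq b inv[OF j'(1) z0] by simp
    finally have "S j z0 = S j' z0"
      using eq b by simp
    then show False
      using inj j j' by (auto dest: inj_onD)
  qed
  then show ?thesis
    by blast
qed

lemma shifted_reciprocal_deriv_bound:
  assumes U: "open U" and holg: "g holomorphic_on U" and injg: "inj_on g U"
    and E: "compact E" "E \<noteq> {}" "E \<subseteq> U" and nz: "\<And>y. y \<in> E \<Longrightarrow> g y \<noteq> 0"
    and f: "\<And>w. w \<in> U \<Longrightarrow> g w \<noteq> 0 \<Longrightarrow> f w = b + 1 / g w"
  shows "\<And>y. y \<in> E \<Longrightarrow> norm (deriv g y) / norm (g y) ^ 2 \<le> (SUP y\<in>E. norm (deriv f y))"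
    and "0 < (SUP y\<in>E. norm (deriv f y))"
proof -
  define q where "q y = norm (deriv g y) / norm (g y) ^ 2" for y
  have SUP_eq: "(SUP y\<in>E. norm (deriv f y)) = (SUP y\<in>E. q y)"
  proof (rule SUP_cong)
    show "norm (deriv f y) = q y" if "y \<in> E" for y
      using deriv_shifted_reciprocal[OF U holg _ nz[OF that] f] that E(3)
      by (auto simp: q_def norm_divide norm_power)
  qed simp
  have "continuous_on E g"
    using holomorphic_on_imp_continuous_on[OF holg] E(3) by (rule continuous_on_subset)
  moreover have "continuous_on E (deriv g)"
    using holomorphic_on_imp_continuous_on[OF holomorphic_deriv[OF holg U]] E(3)
    by (rule continuous_on_subset)
  ultimately have "bdd_above (q ` E)"
    unfolding q_def using nz
    by (intro bounded_imp_bdd_above compact_imp_bounded compact_continuous_image E(1) continuous_intros)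
      auto
  then have qle: "q y \<le> (SUP y\<in>E. q y)" if "y \<in> E" for y
    using that by (intro cSUP_upper)
  then show "norm (deriv g y) / norm (g y) ^ 2 \<le> (SUP y\<in>E. norm (deriv f y))" if "y \<in> E" for y
    using that by (simp add: SUP_eq q_def)
  obtain y where y: "y \<in> E"
    using E(2) by blast
  have "deriv g y \<noteq> 0"
    using holomorphic_injective_imp_regular[OF holg U injg] y E(3) by blast
  then have "0 < q y"
    using nz[OF y] by (simp add: q_def)
  then show "0 < (SUP y\<in>E. norm (deriv f y))"
    using qle[OF y] by (simp add: SUP_eq)
qed

lemma sph_univalent_covnum_le:
  fixes S :: "complex \<Rightarrow> sphere"
  assumes U: "open U" and holS: "sph_holomorphic_on S U" and injS: "inj_on S U"
    and omit: "\<forall>w\<in>U. S w \<noteq> Some b"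
    and E: "compact E" "E \<noteq> {}" "E \<subseteq> U" and fin: "\<forall>z\<in>E. S z \<noteq> None"
    and L: "L > 0"
    and lip: "\<And>g z w. g holomorphic_on U \<Longrightarrow> inj_on g U \<Longrightarrow> z \<in> E \<Longrightarrow> w \<in> E \<Longrightarrow>
       norm (g z - g w) \<le> L * norm (deriv g z0) * norm (z - w)"
    and low: "\<And>g y. g holomorphic_on U \<Longrightarrow> inj_on g U \<Longrightarrow> y \<in> E \<Longrightarrow>
       norm (deriv g z0) \<le> L * norm (deriv g y)"
    and cov: "\<And>c. \<exists>G. delta_cover \<delta> G (cball c (L * L * \<delta>)) \<and> card G \<le> m"
    and \<delta>: "\<delta> > 0"
  shows "covnum \<delta> ((\<lambda>z. the (S z)) ` E) \<le> m * covnum (\<delta> / deriv_max S E) E"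
proof -
  define g where "g = (\<lambda>w. case S w of None \<Rightarrow> 0 | Some v \<Rightarrow> 1 / (v - b))"
  have holg: "g holomorphic_on U"
    unfolding g_def by (rule sph_holomorphic_reciprocal[OF U holS omit])
  have injg: "inj_on g U"
    unfolding g_def by (rule inj_on_sph_reciprocal[OF injS omit])
  have fg: "the (S w) = b + 1 / g w" if "g w \<noteq> 0" for w
    using that by (cases "S w") (auto simp: g_def)
  have gnz: "g z \<noteq> 0" if "z \<in> E" for z
    using fin omit E(3) that by (cases "S z") (auto simp: g_def)
  define M where "M = deriv_max S E"
  have qM: "norm (deriv g y) / norm (g y) ^ 2 \<le> M" if "y \<in> E" for y
    unfolding M_def deriv_max_def by (rule shifted_reciprocal_deriv_bound(1)[OF U holg injg E gnz fg that])
  have M: "M > 0"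
    unfolding M_def deriv_max_def by (rule shifted_reciprocal_deriv_bound(2)[OF U holg injg E gnz fg])
  have close: "dist (the (S z)) (the (S w)) \<le> L * L * \<delta>"
    if z: "z \<in> E" and w: "w \<in> E" and zw: "dist z w \<le> \<delta> / M" for z w
  proof -
    have "dist (the (S z)) (the (S w)) = norm (1 / g z - 1 / g w)"
      using fg[OF gnz[OF z]] fg[OF gnz[OF w]] by (simp add: dist_norm)
    also have "\<dots> \<le> L * L * M * norm (z - w)"
      using L by (intro reciprocal_lipschitz[OF E(1) _ gnz lip[OF holg injg] low[OF holg injg] qM _ z w])
        (simp_all add: holomorphic_on_imp_continuous_on[OF holomorphic_on_subset[OF holg E(3)]])
    also have "\<dots> \<le> L * L * M * (\<delta> / M)"
      using zw L M by (intro mult_left_mono) (simp_all add: dist_norm)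
    also have "\<dots> = L * L * \<delta>"
      using M by simp
    finally show ?thesis .
  qed
  show ?thesis
    unfolding M_def[symmetric] by (rule covnum_image_le[OF E(1) _ close cov]) (use M \<delta> in simp)
qed

theorem lemma3p7:
  fixes T :: "sphere \<Rightarrow> sphere" and d :: nat and E U :: "complex set"
    and S :: "nat \<Rightarrow> nat \<Rightarrow> complex \<Rightarrow> sphere"
  assumes rat: "rational_map_of_degree T d" and d2: "d \<ge> 2"
    and J_bdd: "bounded_in_plane (julia_set T)"
    and J_ne: "julia_set T \<noteq> UNIV"
    and E_ne: "E \<noteq> {}" and E_cpt: "compact E"
    and U_open: "open U" and U_sc: "simply_connected U" and EU: "E \<subseteq> U"
    and U_P: "\<forall>u\<in>U. Some u \<notin> postcritical T"
    and U_J: "\<exists>u\<in>U. Some u \<in> julia_set T"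
    and orb: "bounded_in_plane (orbital_set T E)"
    and S_holo: "\<And>n j. n \<ge> 1 \<Longrightarrow> j \<in> {1..d ^ n} \<Longrightarrow> sph_holomorphic_on (S n j) U"
    and S_inj: "\<And>n j. n \<ge> 1 \<Longrightarrow> j \<in> {1..d ^ n} \<Longrightarrow> inj_on (S n j) U"
    and S_inv: "\<And>n j w. n \<ge> 1 \<Longrightarrow> j \<in> {1..d ^ n} \<Longrightarrow> w \<in> U \<Longrightarrow>
                  (T ^^ n) (S n j w) = Some w"
    and S_distinct: "\<And>n w. n \<ge> 1 \<Longrightarrow> w \<in> U \<Longrightarrow> inj_on (\<lambda>j. S n j w) {1..d ^ n}"
    and S_all: "\<And>n w. n \<ge> 1 \<Longrightarrow> w \<in> U \<Longrightarrow>
                  (T ^^ n) -` {Some w} = (\<lambda>j. S n j w) ` {1..d ^ n}"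
  shows "\<exists>C>0. \<forall>n\<ge>1. \<forall>\<delta>\<in>{0<..<1}. \<forall>j\<in>{1..d ^ n}.
           real (covnum \<delta> ((\<lambda>z. the (S n j z)) ` E))
             \<le> C * real (covnum (\<delta> / deriv_max (S n j) E) E)"
proof -
  obtain z0 where z0: "z0 \<in> E"
    using E_ne by blast
  obtain L where L: "L > 0"
    and lip: "\<And>g z w. g holomorphic_on U \<Longrightarrow> inj_on g U \<Longrightarrow> z \<in> E \<Longrightarrow> w \<in> E \<Longrightarrow>
       norm (g z - g w) \<le> L * norm (deriv g z0) * norm (z - w)"
    and low: "\<And>g y. g holomorphic_on U \<Longrightarrow> inj_on g U \<Longrightarrow> y \<in> E \<Longrightarrow>
       norm (deriv g z0) \<le> L * norm (deriv g y)"
    using univalent_uniform_distortion[OF U_open simply_connected_imp_connected[OF U_sc] E_cpt EU z0]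
    by metis
  obtain m where cov: "\<And>c \<delta>. \<delta> > 0 \<Longrightarrow> \<exists>G. delta_cover \<delta> G (cball c (L * L * \<delta>)) \<and> card G \<le> m"
    using cball_delta_cover_card_bound[of "L * L"] by metis
  have main: "covnum \<delta> ((\<lambda>z. the (S n j z)) ` E) \<le> m * covnum (\<delta> / deriv_max (S n j) E) E"
    if n: "n \<ge> 1" and \<delta>: "\<delta> > 0" and j: "j \<in> {1..d ^ n}" for n j and \<delta> :: real
  proof -
    have fin: "\<forall>z\<in>E. S n i z \<noteq> None" if i: "i \<in> {1..d ^ n}" for i
      using bounded_orbital_set_not_None[OF orb S_inv[OF n i]] EU by blast
    have "d \<le> d ^ n"
      using n d2 by (intro self_le_power) auto
    then have "2 \<le> card {1..d ^ n}"
      using d2 by simp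
    moreover have "z0 \<in> U" "\<And>i. i \<in> {1..d ^ n} \<Longrightarrow> S n i z0 \<noteq> None"
      using z0 EU fin by blast+
    ultimately obtain b where omit: "\<forall>w\<in>U. S n j w \<noteq> Some b"
      using inverse_branch_omits_value[OF S_inv[OF n] S_distinct[OF n] _ _ j] by blast
    show ?thesis
      by (rule sph_univalent_covnum_le[OF U_open S_holo[OF n j] S_inj[OF n j] omit E_cpt E_ne EU
            fin[OF j] L lip low cov[OF \<delta>] \<delta>])
  qed
  show ?thesis
  proof (intro exI[of _ "real m + 1"] conjI allI impI ballI)
    fix n j :: nat and \<delta> :: real
    assume "n \<ge> 1" "\<delta> \<in> {0<..<1}" "j \<in> {1..d ^ n}"
    then have "covnum \<delta> ((\<lambda>z. the (S n j z)) ` E) \<le> m * covnum (\<delta> / deriv_max (S n j) E) E"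
      by (intro main) auto
    then have "real (covnum \<delta> ((\<lambda>z. the (S n j z)) ` E)) \<le> real m * real (covnum (\<delta> / deriv_max (S n j) E) E)"
      by (metis of_nat_le_iff of_nat_mult)
    also have "\<dots> \<le> (real m + 1) * real (covnum (\<delta> / deriv_max (S n j) E) E)"
      by (intro mult_right_mono) auto
    finally show "real (covnum \<delta> ((\<lambda>z. the (S n j z)) ` E))
        \<le> (real m + 1) * real (covnum (\<delta> / deriv_max (S n j) E) E)" .
  qed simp
qed

end
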